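(* Let $n\in\mathbb{N}$, $K>0$, $\Gamma\ge0$, and let $f:[-K,K]^n\to\mathbb{R}$ be $\Gamma$-Lipschitz with respect to $\|\cdot\|_\infty$. Then for every $\epsilon>0$ there exists a discrete-time LIF-SNN $\Phi$ with direct encoding, membrane potential output, $T=1$, $L=2$ and hidden-layer widths $n_1=\big(\max\{\lceil\frac{2K}{\epsilon}\Gamma\rceil,1\}+1\big)n$, $n_2=\max\{\lceil\frac{2K\Gamma}{\epsilon}\rceil^n,1\}$, such that $\sup_{x\in[-K,K]^n}|R(\Phi)(x)-f(x)|\le\epsilon$.
   Context: A function $f$ is $\Gamma$-Lipschitz w.r.t. $\|\cdot\|_\infty$ if $|f(x)-f(y)|\le\Gamma\max_i|x_i-y_i|$ for all $x,y$. A discrete-time LIF-SNN with parameters $W^\ell\in\mathbb{R}^{n_\ell\times n_{\ell-1}}$, $b^\ell\in\mathbb{R}^{n_\ell}$, $u^\ell(0)\in\mathbb{R}^{n_\ell}$, $\beta^\ell\in[0,1]$, $\vartheta^\ell>0$ ($n_0=n$) and direct encoding ($s^0(t)=x$ for all $t\in[T]$) computes $s^\ell(t)=H(\beta^\ell u^\ell(t-1)+W^\ell s^{\ell-1}(t)+b^\ell-\vartheta^\ell\mathbf{1})$, $u^\ell(t)=\beta^\ell u^\ell(t-1)+W^\ell s^{\ell-1}(t)+b^\ell-\vartheta^\ell s^\ell(t)$, $\ell\in[L]$, $t\in[T]$, with $H$ the entrywise Heaviside function ($H(z)=1$ iff $z\ge0$); with membrane potential output its realization is $R(\Phi)(x)=\sum_{t=1}^Ta_t(Vs^L(t)+c)$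 for $a\in\mathbb{R}^T$, $V\in\mathbb{R}^{1\times n_L}$, $c\in\mathbb{R}$. *)

theory Defs
  imports Complex_Main
begin

text \<open>Vectors in R^m are represented as functions nat => real, only the
  components 0..m-1 being relevant.\<close>

definition heav :: "real \<Rightarrow> real" where
  "heav z = (if z \<ge> 0 then 1 else 0)"

definition dist_inf :: "nat \<Rightarrow> (nat \<Rightarrow> real) \<Rightarrow> (nat \<Rightarrow> real) \<Rightarrow> real" where
  "dist_inf n x y = Max (insert 0 {\<bar>x i - y i\<bar> | i. i < n})"

definition lipschitz_inf_on :: "nat \<Rightarrow> (nat \<Rightarrow> real) set \<Rightarrow> real \<Rightarrow> ((nat \<Rightarrow> real) \<Rightarrow> real) \<Rightarrow> bool" where
  "lipschitz_inf_on n S \<Gamma> f \<longleftrightarrow> (\<forall>x\<in>S. \<forall>y\<in>S. \<bar>f x - f y\<bar> \<le> \<Gamma> * dist_inf n x y)"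

definition cube :: "nat \<Rightarrow> real \<Rightarrow> (nat \<Rightarrow> real) set" where
  "cube n K = {x. \<forall>i<n. -K \<le> x i \<and> x i \<le> K}"

text \<open>A discrete-time LIF-SNN with direct encoding and membrane potential output.
  Layer l ranges over 1..depth; width 0 is the input dimension n;
  time t ranges over 1..steps.\<close>
record lif_snn =
  depth :: nat
  width :: "nat \<Rightarrow> nat"
  weight :: "nat \<Rightarrow> nat \<Rightarrow> nat \<Rightarrow> real"
  bias :: "nat \<Rightarrow> nat \<Rightarrow> real"
  u0 :: "nat \<Rightarrow> nat \<Rightarrow> real"
  leak :: "nat \<Rightarrow> real"
  thr :: "nat \<Rightarrow> real"
  steps :: nat
  out_a :: "nat \<Rightarrow> real"
  out_V :: "nat \<Rightarrow> real"
  out_c :: real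

definition snn_wf :: "lif_snn \<Rightarrow> bool" where
  "snn_wf N \<longleftrightarrow> (\<forall>l\<in>{1..depth N}. 0 \<le> leak N l \<and> leak N l \<le> 1 \<and> thr N l > 0)"

text \<open>State (spike vector s^l(t), membrane potential u^l(t)) of layer l at time t;
  layer 0 is the direct encoding s^0(t) = x.\<close>
fun snn_state :: "lif_snn \<Rightarrow> (nat \<Rightarrow> real) \<Rightarrow> nat \<Rightarrow> nat \<Rightarrow> (nat \<Rightarrow> real) \<times> (nat \<Rightarrow> real)" where
  "snn_state N x 0 t = (x, (\<lambda>i. 0))"
| "snn_state N x (Suc l) 0 = ((\<lambda>i. 0), u0 N (Suc l))"
| "snn_state N x (Suc l) (Suc t) =
     (let pre = (\<lambda>i. leak N (Suc l) * snd (snn_state N x (Suc l) t) i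
                    + (\<Sum>j<width N l. weight N (Suc l) i j * fst (snn_state N x l (Suc t)) j)
                    + bias N (Suc l) i);
          s = (\<lambda>i. heav (pre i - thr N (Suc l)))
      in (s, (\<lambda>i. pre i - thr N (Suc l) * s i)))"

definition spikes :: "lif_snn \<Rightarrow> (nat \<Rightarrow> real) \<Rightarrow> nat \<Rightarrow> nat \<Rightarrow> nat \<Rightarrow> real" where
  "spikes N x l t = fst (snn_state N x l t)"

definition realization :: "lif_snn \<Rightarrow> (nat \<Rightarrow> real) \<Rightarrow> real" where
  "realization N x = (\<Sum>t=1..steps N. out_a N t *
      ((\<Sum>i<width N (depth N). out_V N i * spikes N x (depth N) t i) + out_c N))"

end

theory Submission
  imports Defs
begin

text \<open>Cut [-K, K] into m intervals of length 2K/m, with m \<ge> 2K\<Gamma>/\<epsilon>. The first layer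
  compares every coordinate x_i with the m + 1 interval endpoints; the difference of the
  spikes at two neighbouring endpoints is the indicator of the interval between them. A
  second-layer neuron adds one such difference per coordinate and fires at threshold n, so
  it is the indicator of one of the m^n grid cells. Exactly one of them fires, and
  weighting it by the value of f at a corner of its cell gives an error of at most
  \<Gamma> \<cdot> 2K/m \<le> \<epsilon>.\<close>

lemma sum_lessThan_mult_split:
  fixes g :: "nat \<Rightarrow> 'a::comm_monoid_add"
  shows "(\<Sum>q<a * n. g q) = (\<Sum>i<n. \<Sum>k<a. g (i * a + k))"
proof -
  have "(\<Sum>q\<in>{i * a..<i * a + a}. g q) = (\<Sum>k<a. g (i * a + k))" for i
    using sum.shift_bounds_nat_ivl[of g 0 "i * a" a] by (simp add: atLeast0LessThan add.commute)
  then show ?thesis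
    using sum.nat_group[of g a n] by (simp add: mult.commute)
qed

lemma mult_add_div_mod:
  fixes a i k :: nat
  assumes "k < a"
  shows "(i * a + k) div a = i" and "(i * a + k) mod a = k"
  using assms by (simp_all add: add.commute[of "i * a"])

definition digit :: "nat \<Rightarrow> nat \<Rightarrow> nat \<Rightarrow> nat" where
  "digit m j i = j div m ^ i mod m"

lemma digit_less: "m > 0 \<Longrightarrow> digit m j i < m"
  by (simp add: digit_def)

lemma digit_0: "digit m j 0 = j mod m"
  by (simp add: digit_def)

lemma digit_Suc: "digit m j (Suc i) = digit m (j div m) i"
  by (simp add: digit_def div_mult2_eq mult.commute)

lemma ex1_digits:
  assumes "m > 0" and "\<forall>i<n. c i < m"
  shows "\<exists>!j. j < m ^ n \<and> (\<forall>i<n. digit m j i = c i)"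
  using assms(2)
proof (induction n arbitrary: c)
  case 0
  then show ?case by auto
next
  case (Suc n)
  have "\<forall>i<n. c (Suc i) < m" using Suc.prems by simp
  then obtain j' where j': "j' < m ^ n" "\<forall>i<n. digit m j' i = c (Suc i)"
    and unique: "\<And>j. j < m ^ n \<Longrightarrow> \<forall>i<n. digit m j i = c (Suc i) \<Longrightarrow> j = j'"
    using Suc.IH[of "\<lambda>i. c (Suc i)"] by blast
  have "c 0 < m" using Suc.prems by simp
  show ?case
  proof (rule ex1I[of _ "c 0 + m * j'"])
    have "c 0 + m * j' < m * (j' + 1)" using \<open>c 0 < m\<close> by simp
    also have "\<dots> \<le> m * m ^ n" using j'(1) by (intro mult_le_mono2) simp
    finally have "c 0 + m * j' < m ^ Suc n" by simp
    moreover have "digit m (c 0 + m * j') i = c i" if "i < Suc n" for i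
      using \<open>c 0 < m\<close> j'(2) that by (cases i) (auto simp: digit_0 digit_Suc)
    ultimately show "c 0 + m * j' < m ^ Suc n \<and> (\<forall>i<Suc n. digit m (c 0 + m * j') i = c i)"
      by blast
  next
    fix j assume j: "j < m ^ Suc n \<and> (\<forall>i<Suc n. digit m j i = c i)"
    then have "j div m = j'"
      using assms(1) by (intro unique) (auto simp: div_less_iff_less_mult mult.commute simp flip: digit_Suc)
    moreover have "j mod m = c 0" using j by (auto simp flip: digit_0)
    ultimately show "j = c 0 + m * j'"
      by (metis mod_mult_div_eq add.commute)
  qed
qed

lemma ex_interval_index:
  fixes t :: "nat \<Rightarrow> 'a::linorder"
  assumes "t 0 \<le> y" and "y < t m"
  shows "\<exists>d<m. t d \<le> y \<and> y < t (Suc d)"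
  using assms(2)
proof (induction m)
  case 0
  then show ?case using assms(1) by simp
next
  case (Suc m)
  show ?case
  proof (cases "y < t m")
    case True
    then show ?thesis using Suc.IH less_SucI by blast
  next
    case False
    then show ?thesis using Suc.prems by (auto simp: not_less)
  qed
qed

lemma ex1_interval_index:
  fixes t :: "nat \<Rightarrow> 'a::linorder"
  assumes "mono_on {..m} t" and "t 0 \<le> y" and "y < t m"
  shows "\<exists>!d. d < m \<and> t d \<le> y \<and> y < t (Suc d)"
proof (rule ex_ex1I)
  show "\<exists>d. d < m \<and> t d \<le> y \<and> y < t (Suc d)"
    using ex_interval_index[OF assms(2,3)] by blast
next
  have not_before: "\<not> d1 < d2" if "y < t (Suc d1)" "d2 < m" "t d2 \<le> y" for d1 d2
  proof
    assume "d1 < d2"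
    then have "t (Suc d1) \<le> t d2" using mono_onD[OF assms(1)] \<open>d2 < m\<close> by simp
    then show False using that by simp
  qed
  show "d1 = d2"
    if "d1 < m \<and> t d1 \<le> y \<and> y < t (Suc d1)" "d2 < m \<and> t d2 \<le> y \<and> y < t (Suc d2)" for d1 d2
    using that not_before[of d1 d2] not_before[of d2 d1] by auto
qed

lemma heav_diff_le_1: "heav a - heav b \<le> 1"
  by (simp add: heav_def)

lemma heav_diff_eq_1_iff: "heav a - heav b = 1 \<longleftrightarrow> 0 \<le> a \<and> b < 0"
  by (simp add: heav_def)

lemma heav_sum_minus_card:
  fixes e :: "nat \<Rightarrow> real"
  assumes "\<forall>i<n. e i \<le> 1"
  shows "heav ((\<Sum>i<n. e i) - real n) = (if \<forall>i<n. e i = 1 then 1 else 0)"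
proof (cases "\<forall>i<n. e i = 1")
  case True
  then show ?thesis by (simp add: heav_def)
next
  case False
  then obtain i where "i < n" "e i < 1" using assms by force
  then have "(\<Sum>i<n. e i) < (\<Sum>i<n. 1)"
    using assms by (intro sum_strict_mono_ex1) auto
  then show ?thesis using False by (simp add: heav_def)
qed

lemma dist_inf_le:
  assumes "\<forall>i<n. \<bar>x i - y i\<bar> \<le> B" and "0 \<le> B"
  shows "dist_inf n x y \<le> B"
  unfolding dist_inf_def using assms by (intro Max.boundedI) auto

lemma spikes_input: "spikes N x 0 t = x"
  by (simp add: spikes_def)

lemma spikes_first_step:
  "spikes N x (Suc l) 1 i = heav (leak N (Suc l) * u0 N (Suc l) i
     + (\<Sum>j<width N l. weight N (Suc l) i j * spikes N x l 1 j) + bias N (Suc l) i - thr N (Suc l))"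
  by (simp add: spikes_def Let_def)

lemma realization_single_step:
  "steps N = 1 \<Longrightarrow> realization N x
     = out_a N 1 * ((\<Sum>i<width N (depth N). out_V N i * spikes N x (depth N) 1 i) + out_c N)"
  by (simp add: realization_def)

definition grid :: "real \<Rightarrow> nat \<Rightarrow> nat \<Rightarrow> real" where
  "grid K m k = -K + 2 * K * real k / real m"

text \<open>The last threshold lies beyond K, so that the right endpoint K belongs to the last
  cell.\<close>
definition cell_thr :: "real \<Rightarrow> nat \<Rightarrow> nat \<Rightarrow> real" where
  "cell_thr K m k = (if k < m then grid K m k else 2 * K)"

definition in_cell :: "real \<Rightarrow> nat \<Rightarrow> nat \<Rightarrow> real \<Rightarrow> bool" where
  "in_cell K m d y \<longleftrightarrow> cell_thr K m d \<le> y \<and> y < cell_thr K m (Suc d)"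

definition grid_point :: "real \<Rightarrow> nat \<Rightarrow> nat \<Rightarrow> nat \<Rightarrow> real" where
  "grid_point K m j = (\<lambda>i. grid K m (digit m j i))"

lemma grid_Suc: "m > 0 \<Longrightarrow> grid K m (Suc k) = grid K m k + 2 * K / real m"
  by (simp add: grid_def field_simps)

lemma grid_bounds:
  assumes "0 \<le> K" and "k \<le> m"
  shows "-K \<le> grid K m k" and "grid K m k \<le> K"
proof -
  have "2 * K * real k / real m \<le> 2 * K"
    using assms by (cases "m = 0") (auto simp: field_simps mult_left_mono)
  then show "grid K m k \<le> K" by (simp add: grid_def)
  show "-K \<le> grid K m k" using assms by (simp add: grid_def)
qed

lemma mono_grid: "0 \<le> K \<Longrightarrow> mono (grid K m)"
  by (auto intro!: monoI divide_right_mono mult_left_mono simp: grid_def)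

lemma mono_on_cell_thr:
  assumes "0 \<le> K"
  shows "mono_on {..m} (cell_thr K m)"
proof (rule mono_onI)
  fix a b assume "a \<in> {..m}" "b \<in> {..m}" "a \<le> b"
  then show "cell_thr K m a \<le> cell_thr K m b"
    using grid_bounds[OF assms, of a m] monoD[OF mono_grid[OF assms]]
    by (auto simp: cell_thr_def)
qed

lemma ex1_cell:
  assumes "m > 0" and "0 < K" and "-K \<le> y" and "y \<le> K"
  shows "\<exists>!d. d < m \<and> in_cell K m d y"
  unfolding in_cell_def
  using assms by (intro ex1_interval_index mono_on_cell_thr) (auto simp: cell_thr_def grid_def)

lemma in_cell_dist:
  assumes "m > 0" and "d < m" and "in_cell K m d y" and "y \<le> K"
  shows "\<bar>grid K m d - y\<bar> \<le> 2 * K / real m"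
proof -
  have "grid K m d \<le> y" using assms by (simp add: in_cell_def cell_thr_def)
  moreover have "y \<le> grid K m (Suc d)"
  proof (cases "Suc d < m")
    case True
    then show ?thesis using assms(3) by (simp add: in_cell_def cell_thr_def)
  next
    case False
    then have "Suc d = m" using assms(2) by simp
    then show ?thesis using assms(1,4) by (simp add: grid_def)
  qed
  ultimately show ?thesis using grid_Suc[OF assms(1)] by simp
qed

text \<open>Layer-1 neuron i(m+1)+k fires iff x_i \<ge> cell_thr K m k. Layer-2 neuron j, read through
  its base-m digits, receives for every i the spike at the lower endpoint of cell
  digit m j i minus the spike at its upper endpoint, and fires iff all n differences are 1.\<close>
definition grid_net :: "nat \<Rightarrow> real \<Rightarrow> nat \<Rightarrow> ((nat \<Rightarrow> real) \<Rightarrow> real) \<Rightarrow> lif_snn" where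
  "grid_net n K m f = \<lparr> depth = 2,
     width = (\<lambda>l. if l = 0 then n else if l = 1 then (m + 1) * n else m ^ n),
     weight = (\<lambda>l p q. if l = 1 then (if q = p div (m + 1) then 1 else 0)
        else (if q mod (m + 1) = digit m p (q div (m + 1)) then 1 else 0)
           - (if q mod (m + 1) = Suc (digit m p (q div (m + 1))) then 1 else 0)),
     bias = (\<lambda>l p. if l = 1 then 1 - cell_thr K m (p mod (m + 1)) else 1 - real n),
     u0 = (\<lambda>l i. 0), leak = (\<lambda>l. 0), thr = (\<lambda>l. 1), steps = 1, out_a = (\<lambda>t. 1),
     out_V = (\<lambda>j. f (grid_point K m j)), out_c = 0 \<rparr>"

lemma grid_net_simps:
  "depth (grid_net n K m f) = 2" "steps (grid_net n K m f) = 1"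
  "width (grid_net n K m f) 0 = n" "width (grid_net n K m f) 1 = (m + 1) * n"
  "width (grid_net n K m f) 2 = m ^ n"
  "leak (grid_net n K m f) l = 0" "thr (grid_net n K m f) l = 1"
  "bias (grid_net n K m f) 2 j = 1 - real n"
  "out_a (grid_net n K m f) t = 1" "out_V (grid_net n K m f) j = f (grid_point K m j)"
  "out_c (grid_net n K m f) = 0"
  by (simp_all add: grid_net_def)

lemma grid_net_layer1:
  assumes "q div (m + 1) < n"
  shows "spikes (grid_net n K m f) x 1 1 q = heav (x (q div (m + 1)) - cell_thr K m (q mod (m + 1)))"
  using spikes_first_step[of "grid_net n K m f" x 0 q] assms
  by (simp add: grid_net_def spikes_input if_distrib[of "\<lambda>z. z * _"] cong: if_cong)

lemma grid_net_weight2: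
  "weight (grid_net n K m f) 2 j q = (if q mod (m + 1) = digit m j (q div (m + 1)) then 1 else 0)
     - (if q mod (m + 1) = Suc (digit m j (q div (m + 1))) then 1 else 0)"
  by (simp add: grid_net_def)

lemma grid_net_layer2:
  assumes "m > 0"
  shows "spikes (grid_net n K m f) x 2 1 j = heav ((\<Sum>i<n. heav (x i - cell_thr K m (digit m j i))
           - heav (x i - cell_thr K m (Suc (digit m j i)))) - real n)"
proof -
  let ?N = "grid_net n K m f"
  let ?h = "\<lambda>i k. heav (x i - cell_thr K m k)"
  have block: "(\<Sum>k<m + 1. weight ?N 2 j (i * (m + 1) + k) * spikes ?N x 1 1 (i * (m + 1) + k))
      = ?h i (digit m j i) - ?h i (Suc (digit m j i))" if "i < n" for i
  proof -
    have "(\<Sum>k<m + 1. weight ?N 2 j (i * (m + 1) + k) * spikes ?N x 1 1 (i * (m + 1) + k))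
        = (\<Sum>k<m + 1. ((if k = digit m j i then 1 else 0) - (if k = Suc (digit m j i) then 1 else 0)) * ?h i k)"
    proof (rule sum.cong[OF refl])
      fix k assume "k \<in> {..<m + 1}"
      then have q: "(i * (m + 1) + k) div (m + 1) = i" "(i * (m + 1) + k) mod (m + 1) = k"
        by (simp_all only: mult_add_div_mod lessThan_iff)
      show "weight ?N 2 j (i * (m + 1) + k) * spikes ?N x 1 1 (i * (m + 1) + k)
          = ((if k = digit m j i then 1 else 0) - (if k = Suc (digit m j i) then 1 else 0)) * ?h i k"
        using grid_net_layer1[of "i * (m + 1) + k" m n K f x] that
        unfolding grid_net_weight2 q by simp
    qed
    also have "\<dots> = ?h i (digit m j i) - ?h i (Suc (digit m j i))"
      using digit_less[OF assms, of j i]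
      by (simp add: left_diff_distrib sum_subtractf if_distrib[of "\<lambda>z. z * _"] cong: if_cong)
    finally show ?thesis .
  qed
  have "spikes ?N x 2 1 j = heav ((\<Sum>q<(m + 1) * n. weight ?N 2 j q * spikes ?N x 1 1 q) - real n)"
    using spikes_first_step[of ?N x 1 j, unfolded Suc_1] by (simp add: grid_net_simps del: One_nat_def)
  also have "(\<Sum>q<(m + 1) * n. weight ?N 2 j q * spikes ?N x 1 1 q)
      = (\<Sum>i<n. ?h i (digit m j i) - ?h i (Suc (digit m j i)))"
    unfolding sum_lessThan_mult_split by (rule sum.cong[OF refl]) (rule block, simp)
  finally show ?thesis .
qed

lemma grid_net_layer2_cell:
  assumes "m > 0"
  shows "spikes (grid_net n K m f) x 2 1 j = (if \<forall>i<n. in_cell K m (digit m j i) (x i) then 1 else 0)"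
  unfolding grid_net_layer2[OF assms] in_cell_def
  by (subst heav_sum_minus_card) (auto simp: heav_diff_le_1 heav_diff_eq_1_iff)

lemma grid_net_realization:
  assumes "m > 0" and "0 < K" and "x \<in> cube n K"
  obtains j where "j < m ^ n" and "\<forall>i<n. in_cell K m (digit m j i) (x i)"
    and "realization (grid_net n K m f) x = f (grid_point K m j)"
proof -
  let ?N = "grid_net n K m f"
  have cell: "\<exists>!d. d < m \<and> in_cell K m d (x i)" if "i < n" for i
    using assms that by (intro ex1_cell) (auto simp: cube_def)
  then obtain c where c: "\<forall>i<n. c i < m \<and> in_cell K m (c i) (x i)"
    by (metis lessThan_iff bchoice)
  then obtain j0 where j0: "j0 < m ^ n" "\<forall>i<n. digit m j0 i = c i"
    and unique: "\<And>j. j < m ^ n \<Longrightarrow> \<forall>i<n. digit m j i = c i \<Longrightarrow> j = j0"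
    using ex1_digits[OF assms(1), of n c] by blast
  have in_cell_iff: "(\<forall>i<n. in_cell K m (digit m j i) (x i)) \<longleftrightarrow> j = j0" if "j < m ^ n" for j
  proof
    assume "\<forall>i<n. in_cell K m (digit m j i) (x i)"
    then have "\<forall>i<n. digit m j i = c i"
      using cell c digit_less[OF assms(1)] by blast
    then show "j = j0" using unique that by blast
  qed (use c j0 in simp)
  have "realization ?N x = (\<Sum>j<m ^ n. f (grid_point K m j) * spikes ?N x 2 1 j)"
    by (simp add: realization_single_step grid_net_simps del: One_nat_def)
  also have "\<dots> = (\<Sum>j<m ^ n. if j = j0 then f (grid_point K m j) else 0)"
    by (rule sum.cong) (simp_all add: grid_net_layer2_cell[OF assms(1)] in_cell_iff del: One_nat_def)
  also have "\<dots> = f (grid_point K m j0)" using j0(1) by simp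
  finally show ?thesis using that j0 c by simp
qed

lemma grid_net_approximation:
  assumes "m > 0" and "0 < K" and "0 \<le> \<Gamma>" and lip: "lipschitz_inf_on n (cube n K) \<Gamma> f"
    and x: "x \<in> cube n K"
  shows "\<bar>realization (grid_net n K m f) x - f x\<bar> \<le> \<Gamma> * (2 * K / real m)"
proof -
  obtain j where "\<forall>i<n. in_cell K m (digit m j i) (x i)"
    and realization: "realization (grid_net n K m f) x = f (grid_point K m j)"
    using grid_net_realization[OF assms(1,2) x] .
  then have "dist_inf n (grid_point K m j) x \<le> 2 * K / real m"
    using x assms(1,2) digit_less[OF assms(1)]
    by (intro dist_inf_le) (auto simp: grid_point_def cube_def intro: in_cell_dist)
  moreover have "grid_point K m j \<in> cube n K"
    using grid_bounds[of K] digit_less[OF assms(1)] assms(2)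
    by (auto simp: cube_def grid_point_def less_imp_le)
  then have "\<bar>f (grid_point K m j) - f x\<bar> \<le> \<Gamma> * dist_inf n (grid_point K m j) x"
    using lip x by (simp add: lipschitz_inf_on_def)
  ultimately show ?thesis
    unfolding realization using assms(3) by (meson mult_left_mono order_trans)
qed

lemma max_power_one: "max (M ^ n) 1 = max M 1 ^ n" for M :: nat
proof (cases "M = 0")
  case False
  then have "1 \<le> M" "1 \<le> M ^ n" by simp_all
  then show ?thesis by (simp add: max_absorb1)
qed (simp add: power_0_left)

theorem corollaryB9:
  fixes n :: nat and K \<Gamma> :: real and f :: "(nat \<Rightarrow> real) \<Rightarrow> real"
  assumes "K > 0" and "\<Gamma> \<ge> 0"
    and "lipschitz_inf_on n (cube n K) \<Gamma> f"
  shows "\<forall>\<epsilon>>0. \<exists>N. snn_wf N \<and> steps N = 1 \<and> depth N = 2 \<and> width N 0 = n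
      \<and> width N 1 = (max (nat \<lceil>2 * K / \<epsilon> * \<Gamma>\<rceil>) 1 + 1) * n
      \<and> width N 2 = max ((nat \<lceil>2 * K * \<Gamma> / \<epsilon>\<rceil>) ^ n) 1
      \<and> (\<forall>x\<in>cube n K. \<bar>realization N x - f x\<bar> \<le> \<epsilon>)"
proof (intro allI impI)
  fix \<epsilon> :: real assume "\<epsilon> > 0"
  define m where "m = max (nat \<lceil>2 * K * \<Gamma> / \<epsilon>\<rceil>) 1"
  have "m > 0" by (simp add: m_def)
  have "2 * K * \<Gamma> / \<epsilon> \<le> real m"
    unfolding m_def by linarith
  then have "\<Gamma> * (2 * K / real m) \<le> \<epsilon>"
    using \<open>\<epsilon> > 0\<close> \<open>m > 0\<close> by (simp add: field_simps)
  then have "\<forall>x\<in>cube n K. \<bar>realization (grid_net n K m f) x - f x\<bar> \<le> \<epsilon>"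
    using grid_net_approximation[OF \<open>m > 0\<close> assms] by fastforce
  moreover have "snn_wf (grid_net n K m f)"
    by (simp add: snn_wf_def grid_net_def)
  ultimately show "\<exists>N. snn_wf N \<and> steps N = 1 \<and> depth N = 2 \<and> width N 0 = n
      \<and> width N 1 = (max (nat \<lceil>2 * K / \<epsilon> * \<Gamma>\<rceil>) 1 + 1) * n
      \<and> width N 2 = max ((nat \<lceil>2 * K * \<Gamma> / \<epsilon>\<rceil>) ^ n) 1
      \<and> (\<forall>x\<in>cube n K. \<bar>realization N x - f x\<bar> \<le> \<epsilon>)"
    by (intro exI[of _ "grid_net n K m f"])
      (simp add: grid_net_simps max_power_one m_def del: One_nat_def)
qed

end
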